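(* Let $\mathcal A$ be an abelian category and let $0\to F\xrightarrow{i} M\xrightarrow{d} C\to 0$ be a fully invariant short exact sequence in $\mathcal A$. (1) Assume that $M$ is (strongly) self-$F$-split, and let $N$ be a direct summand of $M$ with $F\subseteq N$. Then for every (fully invariant) direct summand $K$ of $M$, $K\cap N$ is a (fully invariant) direct summand of $M$. (2) Assume that $M$ is dual (strongly) self-$F$-split, and let $N$ be a direct summand of $M$ with $N\subseteq F$. Then for every (fully invariant) direct summand $K$ of $M$, $K+N$ is a (fully invariant) direct summand of $M$.
   Context: Convention: each statement containing parenthetical words holds in two versions: one obtained by deleting all parenthetical words and one obtained by keeping all of them. Let $\mathcal A$ be an abelian category. A morphism $s:X\to Y$ is a section if $ts=1_X$ for some $t$, and a retraction if $st=1_Y$ for some $t$. A monomorphism $i:K\to M$ is fully invariant if for every morphism $h:M\to M$ there is $\alpha:K\to K$ with $hi=i\alpha$; an epimorphism $d:M\to C$ is fully coinvariant if for every $h:M\to M$ there is $\beta:C\to C$ with $dh=\beta d$. A subobject is fully invariant if its inclusion is. A short exact sequence $0\to F\xrightarrow{i}N\xrightarrow{d}C\to 0$ is fully invariant if $i$ is fully invariant. A (fully invariant) direct summand is a subobject whose inclusion is a (fully invariant) section. For an object $M$ and a fully invariant short exact sequence $0\to F\xrightarrow{i}N\xrightarrow{d}C\to 0$: $N$ is (strongly) $M$-$F$-split if for every morphism $g:M\to N$, $\ker(dg)$ (equivalently the morphism $P\to M$ in the pullback of $i$ along $g$) is a (fully invariant) section; $N$ is dual (strongly) $M$-$F$-split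 if for every morphism $g:N\to M$, $\mathrm{coker}(gi)$ (equivalently the morphism $M\to Q$ in the pushout of $d$ along $g$) is a (fully coinvariant) retraction. Self-versions: take $M=N$. *)

theory Defs
  imports Main
begin

text \<open>An explicit encoding of (small) abelian categories: a set of objects, a set of arrows,
  source/target, composition (cmp g f = g after f), identities, and the preadditive
  structure on hom-sets (add, zer, neg).\<close>

record ('o, 'm) acat =
  ob  :: "'o set"
  ar  :: "'m set"
  src :: "'m \<Rightarrow> 'o"
  tgt :: "'m \<Rightarrow> 'o"
  cmp :: "'m \<Rightarrow> 'm \<Rightarrow> 'm"
  idn :: "'o \<Rightarrow> 'm"
  add :: "'m \<Rightarrow> 'm \<Rightarrow> 'm"
  zer :: "'o \<Rightarrow> 'o \<Rightarrow> 'm"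
  neg :: "'m \<Rightarrow> 'm"

definition hom :: "('o, 'm, 'x) acat_scheme \<Rightarrow> 'o \<Rightarrow> 'o \<Rightarrow> 'm set" where
  "hom A X Y = {f \<in> ar A. src A f = X \<and> tgt A f = Y}"

definition category :: "('o, 'm, 'x) acat_scheme \<Rightarrow> bool" where
  "category A \<longleftrightarrow>
     (\<forall>f\<in>ar A. src A f \<in> ob A \<and> tgt A f \<in> ob A) \<and>
     (\<forall>X\<in>ob A. idn A X \<in> hom A X X) \<and>
     (\<forall>f\<in>ar A. \<forall>g\<in>ar A. tgt A f = src A g \<longrightarrow> cmp A g f \<in> hom A (src A f) (tgt A g)) \<and>
     (\<forall>f\<in>ar A. cmp A f (idn A (src A f)) = f \<and> cmp A (idn A (tgt A f)) f = f) \<and>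
     (\<forall>f\<in>ar A. \<forall>g\<in>ar A. \<forall>h\<in>ar A. tgt A f = src A g \<and> tgt A g = src A h \<longrightarrow>
        cmp A h (cmp A g f) = cmp A (cmp A h g) f)"

definition preadditive :: "('o, 'm, 'x) acat_scheme \<Rightarrow> bool" where
  "preadditive A \<longleftrightarrow>
     (\<forall>X\<in>ob A. \<forall>Y\<in>ob A.
        zer A X Y \<in> hom A X Y \<and>
        (\<forall>f\<in>hom A X Y. \<forall>g\<in>hom A X Y. add A f g \<in> hom A X Y) \<and>
        (\<forall>f\<in>hom A X Y. neg A f \<in> hom A X Y) \<and>
        (\<forall>f\<in>hom A X Y. \<forall>g\<in>hom A X Y. \<forall>h\<in>hom A X Y.
            add A (add A f g) h = add A f (add A g h)) \<and>
        (\<forall>f\<in>hom A X Y. \<forall>g\<in>hom A X Y. add A f g = add A g f) \<and>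
        (\<forall>f\<in>hom A X Y. add A f (zer A X Y) = f) \<and>
        (\<forall>f\<in>hom A X Y. add A f (neg A f) = zer A X Y)) \<and>
     (\<forall>X\<in>ob A. \<forall>Y\<in>ob A. \<forall>Z\<in>ob A.
        (\<forall>f\<in>hom A X Y. \<forall>g\<in>hom A Y Z. \<forall>g'\<in>hom A Y Z.
            cmp A (add A g g') f = add A (cmp A g f) (cmp A g' f)) \<and>
        (\<forall>f\<in>hom A X Y. \<forall>f'\<in>hom A X Y. \<forall>g\<in>hom A Y Z.
            cmp A g (add A f f') = add A (cmp A g f) (cmp A g f')))"

definition mono :: "('o, 'm, 'x) acat_scheme \<Rightarrow> 'm \<Rightarrow> bool" where
  "mono A f \<longleftrightarrow> f \<in> ar A \<and>
     (\<forall>g\<in>ar A. \<forall>h\<in>ar A. tgt A g = src A f \<and> tgt A h = src A f \<and> src A g = src A h \<and>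
        cmp A f g = cmp A f h \<longrightarrow> g = h)"

definition epi :: "('o, 'm, 'x) acat_scheme \<Rightarrow> 'm \<Rightarrow> bool" where
  "epi A f \<longleftrightarrow> f \<in> ar A \<and>
     (\<forall>g\<in>ar A. \<forall>h\<in>ar A. src A g = tgt A f \<and> src A h = tgt A f \<and> tgt A g = tgt A h \<and>
        cmp A g f = cmp A h f \<longrightarrow> g = h)"

definition is_kernel :: "('o, 'm, 'x) acat_scheme \<Rightarrow> 'm \<Rightarrow> 'm \<Rightarrow> bool" where
  "is_kernel A k f \<longleftrightarrow> k \<in> ar A \<and> f \<in> ar A \<and> tgt A k = src A f \<and>
     cmp A f k = zer A (src A k) (tgt A f) \<and>
     (\<forall>g\<in>ar A. tgt A g = src A f \<and> cmp A f g = zer A (src A g) (tgt A f) \<longrightarrow>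
        (\<exists>!u. u \<in> hom A (src A g) (src A k) \<and> cmp A k u = g))"

definition is_cokernel :: "('o, 'm, 'x) acat_scheme \<Rightarrow> 'm \<Rightarrow> 'm \<Rightarrow> bool" where
  "is_cokernel A c f \<longleftrightarrow> c \<in> ar A \<and> f \<in> ar A \<and> src A c = tgt A f \<and>
     cmp A c f = zer A (src A f) (tgt A c) \<and>
     (\<forall>g\<in>ar A. src A g = tgt A f \<and> cmp A g f = zer A (src A f) (tgt A g) \<longrightarrow>
        (\<exists>!u. u \<in> hom A (tgt A c) (tgt A g) \<and> cmp A u c = g))"

definition is_biproduct ::
  "('o, 'm, 'x) acat_scheme \<Rightarrow> 'o \<Rightarrow> 'o \<Rightarrow> 'o \<Rightarrow> 'm \<Rightarrow> 'm \<Rightarrow> 'm \<Rightarrow> 'm \<Rightarrow> bool" where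
  "is_biproduct A X Y P p1 p2 j1 j2 \<longleftrightarrow> P \<in> ob A \<and>
     p1 \<in> hom A P X \<and> p2 \<in> hom A P Y \<and> j1 \<in> hom A X P \<and> j2 \<in> hom A Y P \<and>
     cmp A p1 j1 = idn A X \<and> cmp A p2 j2 = idn A Y \<and>
     cmp A p1 j2 = zer A Y X \<and> cmp A p2 j1 = zer A X Y \<and>
     add A (cmp A j1 p1) (cmp A j2 p2) = idn A P"

definition abelian :: "('o, 'm, 'x) acat_scheme \<Rightarrow> bool" where
  "abelian A \<longleftrightarrow> category A \<and> preadditive A \<and>
     (\<exists>Z\<in>ob A. idn A Z = zer A Z Z) \<and>
     (\<forall>X\<in>ob A. \<forall>Y\<in>ob A. \<exists>P p1 p2 j1 j2. is_biproduct A X Y P p1 p2 j1 j2) \<and>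
     (\<forall>f\<in>ar A. \<exists>k. is_kernel A k f) \<and>
     (\<forall>f\<in>ar A. \<exists>c. is_cokernel A c f) \<and>
     (\<forall>m. mono A m \<longrightarrow> (\<exists>f. is_kernel A m f)) \<and>
     (\<forall>e. epi A e \<longrightarrow> (\<exists>f. is_cokernel A e f))"

definition is_section :: "('o, 'm, 'x) acat_scheme \<Rightarrow> 'm \<Rightarrow> bool" where
  "is_section A s \<longleftrightarrow> s \<in> ar A \<and> (\<exists>t\<in>hom A (tgt A s) (src A s). cmp A t s = idn A (src A s))"

definition is_retraction :: "('o, 'm, 'x) acat_scheme \<Rightarrow> 'm \<Rightarrow> bool" where
  "is_retraction A s \<longleftrightarrow> s \<in> ar A \<and> (\<exists>t\<in>hom A (tgt A s) (src A s). cmp A s t = idn A (tgt A s))"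

definition fully_invariant_mono :: "('o, 'm, 'x) acat_scheme \<Rightarrow> 'm \<Rightarrow> bool" where
  "fully_invariant_mono A i \<longleftrightarrow> mono A i \<and>
     (\<forall>h\<in>hom A (tgt A i) (tgt A i). \<exists>\<alpha>\<in>hom A (src A i) (src A i). cmp A h i = cmp A i \<alpha>)"

definition fully_coinvariant_epi :: "('o, 'm, 'x) acat_scheme \<Rightarrow> 'm \<Rightarrow> bool" where
  "fully_coinvariant_epi A d \<longleftrightarrow> epi A d \<and>
     (\<forall>h\<in>hom A (src A d) (src A d). \<exists>\<beta>\<in>hom A (tgt A d) (tgt A d). cmp A d h = cmp A \<beta> d)"

definition short_exact :: "('o, 'm, 'x) acat_scheme \<Rightarrow> 'm \<Rightarrow> 'm \<Rightarrow> bool" where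
  "short_exact A i d \<longleftrightarrow> mono A i \<and> epi A d \<and> tgt A i = src A d \<and>
     is_kernel A i d \<and> is_cokernel A d i"

definition M_F_split :: "('o, 'm, 'x) acat_scheme \<Rightarrow> 'o \<Rightarrow> 'm \<Rightarrow> 'm \<Rightarrow> bool" where
  "M_F_split A M i d \<longleftrightarrow>
     (\<forall>g\<in>hom A M (tgt A i). \<forall>k. is_kernel A k (cmp A d g) \<longrightarrow> is_section A k)"

definition strongly_M_F_split :: "('o, 'm, 'x) acat_scheme \<Rightarrow> 'o \<Rightarrow> 'm \<Rightarrow> 'm \<Rightarrow> bool" where
  "strongly_M_F_split A M i d \<longleftrightarrow>
     (\<forall>g\<in>hom A M (tgt A i). \<forall>k. is_kernel A k (cmp A d g) \<longrightarrow>
        is_section A k \<and> fully_invariant_mono A k)"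

definition dual_M_F_split :: "('o, 'm, 'x) acat_scheme \<Rightarrow> 'o \<Rightarrow> 'm \<Rightarrow> 'm \<Rightarrow> bool" where
  "dual_M_F_split A M i d \<longleftrightarrow>
     (\<forall>g\<in>hom A (tgt A i) M. \<forall>c. is_cokernel A c (cmp A g i) \<longrightarrow> is_retraction A c)"

definition dual_strongly_M_F_split :: "('o, 'm, 'x) acat_scheme \<Rightarrow> 'o \<Rightarrow> 'm \<Rightarrow> 'm \<Rightarrow> bool" where
  "dual_strongly_M_F_split A M i d \<longleftrightarrow>
     (\<forall>g\<in>hom A (tgt A i) M. \<forall>c. is_cokernel A c (cmp A g i) \<longrightarrow>
        is_retraction A c \<and> fully_coinvariant_epi A c)"

text \<open>Subobjects are represented by their inclusion monomorphisms.\<close>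
definition direct_summand :: "('o, 'm, 'x) acat_scheme \<Rightarrow> 'm \<Rightarrow> 'o \<Rightarrow> bool" where
  "direct_summand A k M \<longleftrightarrow> is_section A k \<and> tgt A k = M"

definition fi_direct_summand :: "('o, 'm, 'x) acat_scheme \<Rightarrow> 'm \<Rightarrow> 'o \<Rightarrow> bool" where
  "fi_direct_summand A k M \<longleftrightarrow> direct_summand A k M \<and> fully_invariant_mono A k"

definition subobj_le :: "('o, 'm, 'x) acat_scheme \<Rightarrow> 'm \<Rightarrow> 'm \<Rightarrow> bool" where
  "subobj_le A a b \<longleftrightarrow> (\<exists>u\<in>hom A (src A a) (src A b). a = cmp A b u)"

definition is_pullback :: "('o, 'm, 'x) acat_scheme \<Rightarrow> 'm \<Rightarrow> 'm \<Rightarrow> 'm \<Rightarrow> 'm \<Rightarrow> bool" where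
  "is_pullback A k n p1 p2 \<longleftrightarrow> k \<in> ar A \<and> n \<in> ar A \<and> tgt A k = tgt A n \<and>
     p1 \<in> hom A (src A p1) (src A k) \<and> p2 \<in> hom A (src A p1) (src A n) \<and>
     cmp A k p1 = cmp A n p2 \<and>
     (\<forall>a\<in>ar A. \<forall>b\<in>ar A. tgt A a = src A k \<and> tgt A b = src A n \<and> src A a = src A b \<and>
        cmp A k a = cmp A n b \<longrightarrow>
        (\<exists>!u. u \<in> hom A (src A a) (src A p1) \<and> cmp A p1 u = a \<and> cmp A p2 u = b))"

definition is_intersection :: "('o, 'm, 'x) acat_scheme \<Rightarrow> 'm \<Rightarrow> 'm \<Rightarrow> 'm \<Rightarrow> bool" where
  "is_intersection A k n m \<longleftrightarrow> (\<exists>p1 p2. is_pullback A k n p1 p2 \<and> m = cmp A k p1)"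

text \<open>m represents the sum K + N of subobjects k, n: it is the image (mono part of an
  epi-mono factorisation) of the map K \<oplus> N \<rightarrow> M induced by k and n.\<close>
definition is_sum :: "('o, 'm, 'x) acat_scheme \<Rightarrow> 'm \<Rightarrow> 'm \<Rightarrow> 'm \<Rightarrow> bool" where
  "is_sum A k n m \<longleftrightarrow> (\<exists>P p1 p2 j1 j2 e.
     is_biproduct A (src A k) (src A n) P p1 p2 j1 j2 \<and>
     mono A m \<and> tgt A m = tgt A k \<and> epi A e \<and> e \<in> hom A P (src A m) \<and>
     cmp A m e = add A (cmp A k p1) (cmp A n p2))"

end

theory Submission
  imports Defs
begin

text \<open>
  Write \<open>e\<^sub>K = k t\<close> and \<open>e\<^sub>N = n s\<close> for the idempotents of the summands \<open>K\<close> and \<open>N\<close> of \<open>M\<close>.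

  For (1) let \<open>g = (1 - e\<^sub>N) e\<^sub>K\<close>. Since \<open>s g = 0\<close> and \<open>F \<subseteq> N\<close>, a map \<open>x\<close> into \<open>M\<close> satisfies
  \<open>d g x = 0\<close> iff \<open>g x = 0\<close>, so the kernel \<open>\<kappa>\<close> of \<open>d g\<close>, a section by hypothesis, is the kernel of \<open>g\<close>.
  A subobject of \<open>K\<close> lies in \<open>ker g\<close> iff it lies in \<open>N\<close>; hence \<open>K \<inter> N\<close> contains \<open>e\<^sub>K \<kappa>\<close>, which makes
  \<open>K \<inter> N\<close> a retract of \<open>\<kappa>\<close> and so a summand. If \<open>K\<close> and \<open>\<kappa>\<close> are fully invariant, so is
  \<open>K \<inter> ker g = K \<inter> N\<close>.

  For (2) let \<open>g = (1 - e\<^sub>K) e\<^sub>N\<close>. Then \<open>g i\<close> factors through \<open>K + N\<close>, so for the cokernel \<open>c\<close> of \<open>g i\<close>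
  with section \<open>\<sigma>\<close> the image of \<open>1 - \<sigma> c\<close> lies in \<open>K + N\<close>. As \<open>N \<subseteq> F\<close>, \<open>c\<close> kills \<open>(1 - e\<^sub>K) n\<close>, so
  \<open>\<phi> = e\<^sub>K + (1 - \<sigma> c)(1 - e\<^sub>K)\<close> factors through \<open>K + N\<close> and fixes \<open>K\<close> and \<open>N\<close>; hence it is the identity
  on \<open>K + N\<close>, which is therefore a summand. If moreover \<open>c\<close> is fully coinvariant and \<open>K\<close> fully invariant,
  every endomorphism maps \<open>K\<close> and \<open>N\<close>, hence \<open>K + N\<close>, into \<open>K + N\<close>.
\<close>

section \<open>Preadditive calculus\<close>

locale abelian_category =
  fixes A :: "('o, 'm) acat"
  assumes abelian: "abelian A"
begin

lemma is_category: "category A" and is_preadditive: "preadditive A"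
  using abelian unfolding abelian_def by auto

lemma in_hom_iff [simp]: "f \<in> hom A X Y \<longleftrightarrow> f \<in> ar A \<and> src A f = X \<and> tgt A f = Y"
  unfolding hom_def by auto

lemma src_in_ob [simp]: "f \<in> ar A \<Longrightarrow> src A f \<in> ob A"
  and tgt_in_ob [simp]: "f \<in> ar A \<Longrightarrow> tgt A f \<in> ob A"
  using is_category unfolding category_def by blast+

lemma idn_in_ar [simp]: "X \<in> ob A \<Longrightarrow> idn A X \<in> ar A"
  and src_idn [simp]: "X \<in> ob A \<Longrightarrow> src A (idn A X) = X"
  and tgt_idn [simp]: "X \<in> ob A \<Longrightarrow> tgt A (idn A X) = X"
  using is_category unfolding category_def by auto

lemma cmp_in_ar [simp]: "f \<in> ar A \<Longrightarrow> g \<in> ar A \<Longrightarrow> tgt A f = src A g \<Longrightarrow> cmp A g f \<in> ar A"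
  and src_cmp [simp]: "f \<in> ar A \<Longrightarrow> g \<in> ar A \<Longrightarrow> tgt A f = src A g \<Longrightarrow> src A (cmp A g f) = src A f"
  and tgt_cmp [simp]: "f \<in> ar A \<Longrightarrow> g \<in> ar A \<Longrightarrow> tgt A f = src A g \<Longrightarrow> tgt A (cmp A g f) = tgt A g"
  using is_category unfolding category_def by auto

lemma cmp_idn_right [simp]: "f \<in> ar A \<Longrightarrow> X = src A f \<Longrightarrow> cmp A f (idn A X) = f"
  and cmp_idn_left [simp]: "f \<in> ar A \<Longrightarrow> X = tgt A f \<Longrightarrow> cmp A (idn A X) f = f"
  using is_category unfolding category_def by auto

lemma cmp_assoc [simp]:
  "f \<in> ar A \<Longrightarrow> g \<in> ar A \<Longrightarrow> h \<in> ar A \<Longrightarrow> tgt A f = src A g \<Longrightarrow> tgt A g = src A h \<Longrightarrow>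
   cmp A (cmp A h g) f = cmp A h (cmp A g f)"
  using is_category unfolding category_def by auto

lemma zer_in_ar [simp]: "X \<in> ob A \<Longrightarrow> Y \<in> ob A \<Longrightarrow> zer A X Y \<in> ar A"
  and src_zer [simp]: "X \<in> ob A \<Longrightarrow> Y \<in> ob A \<Longrightarrow> src A (zer A X Y) = X"
  and tgt_zer [simp]: "X \<in> ob A \<Longrightarrow> Y \<in> ob A \<Longrightarrow> tgt A (zer A X Y) = Y"
  using is_preadditive unfolding preadditive_def by auto

lemma preadditive_hom_group:
  assumes "X \<in> ob A" "Y \<in> ob A" "f \<in> hom A X Y" "g \<in> hom A X Y" "h \<in> hom A X Y"
  shows "add A f g \<in> hom A X Y" "neg A f \<in> hom A X Y"
    "add A (add A f g) h = add A f (add A g h)" "add A f g = add A g f"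
    "add A f (zer A X Y) = f" "add A f (neg A f) = zer A X Y"
proof -
  have "zer A X Y \<in> hom A X Y \<and>
      (\<forall>f\<in>hom A X Y. \<forall>g\<in>hom A X Y. add A f g \<in> hom A X Y) \<and>
      (\<forall>f\<in>hom A X Y. neg A f \<in> hom A X Y) \<and>
      (\<forall>f\<in>hom A X Y. \<forall>g\<in>hom A X Y. \<forall>h\<in>hom A X Y.
          add A (add A f g) h = add A f (add A g h)) \<and>
      (\<forall>f\<in>hom A X Y. \<forall>g\<in>hom A X Y. add A f g = add A g f) \<and>
      (\<forall>f\<in>hom A X Y. add A f (zer A X Y) = f) \<and>
      (\<forall>f\<in>hom A X Y. add A f (neg A f) = zer A X Y)"
    using bspec[OF bspec[OF conjunct1[OF is_preadditive[unfolded preadditive_def]] assms(1)] assms(2)] .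
  then show "add A f g \<in> hom A X Y" "neg A f \<in> hom A X Y"
    "add A (add A f g) h = add A f (add A g h)" "add A f g = add A g f"
    "add A f (zer A X Y) = f" "add A f (neg A f) = zer A X Y"
    using assms(3-5) by (auto simp del: in_hom_iff)
qed

lemma add_in_ar [simp]:
    "f \<in> ar A \<Longrightarrow> g \<in> ar A \<Longrightarrow> src A f = src A g \<Longrightarrow> tgt A f = tgt A g \<Longrightarrow> add A f g \<in> ar A"
  and src_add [simp]:
    "f \<in> ar A \<Longrightarrow> g \<in> ar A \<Longrightarrow> src A f = src A g \<Longrightarrow> tgt A f = tgt A g \<Longrightarrow> src A (add A f g) = src A f"
  and tgt_add [simp]:
    "f \<in> ar A \<Longrightarrow> g \<in> ar A \<Longrightarrow> src A f = src A g \<Longrightarrow> tgt A f = tgt A g \<Longrightarrow> tgt A (add A f g) = tgt A f"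
  using preadditive_hom_group(1)[of "src A f" "tgt A f" f g g] by auto

lemma neg_in_ar [simp]: "f \<in> ar A \<Longrightarrow> neg A f \<in> ar A"
  and src_neg [simp]: "f \<in> ar A \<Longrightarrow> src A (neg A f) = src A f"
  and tgt_neg [simp]: "f \<in> ar A \<Longrightarrow> tgt A (neg A f) = tgt A f"
  using preadditive_hom_group(2)[of "src A f" "tgt A f" f f f] by auto

lemma add_assoc:
  "f \<in> ar A \<Longrightarrow> g \<in> ar A \<Longrightarrow> h \<in> ar A \<Longrightarrow> src A f = src A g \<Longrightarrow> tgt A f = tgt A g \<Longrightarrow>
   src A h = src A g \<Longrightarrow> tgt A h = tgt A g \<Longrightarrow> add A (add A f g) h = add A f (add A g h)"
  using preadditive_hom_group(3)[of "src A f" "tgt A f" f g h] by auto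

lemma add_commute:
  "f \<in> ar A \<Longrightarrow> g \<in> ar A \<Longrightarrow> src A f = src A g \<Longrightarrow> tgt A f = tgt A g \<Longrightarrow> add A f g = add A g f"
  using preadditive_hom_group(4)[of "src A f" "tgt A f" f g g] by auto

lemma add_zer_right [simp]: "f \<in> ar A \<Longrightarrow> X = src A f \<Longrightarrow> Y = tgt A f \<Longrightarrow> add A f (zer A X Y) = f"
  and add_neg_right [simp]: "f \<in> ar A \<Longrightarrow> add A f (neg A f) = zer A (src A f) (tgt A f)"
  using preadditive_hom_group(5,6)[of "src A f" "tgt A f" f f f] by auto

lemma add_zer_left [simp]: "f \<in> ar A \<Longrightarrow> X = src A f \<Longrightarrow> Y = tgt A f \<Longrightarrow> add A (zer A X Y) f = f"
  by (subst add_commute) auto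

lemma preadditive_bilinear:
  assumes "X \<in> ob A" "Y \<in> ob A" "Z \<in> ob A" "f \<in> hom A X Y" "f' \<in> hom A X Y"
    "g \<in> hom A Y Z" "g' \<in> hom A Y Z"
  shows "cmp A (add A g g') f = add A (cmp A g f) (cmp A g' f)"
    "cmp A g (add A f f') = add A (cmp A g f) (cmp A g f')"
proof -
  have "(\<forall>f\<in>hom A X Y. \<forall>g\<in>hom A Y Z. \<forall>g'\<in>hom A Y Z.
            cmp A (add A g g') f = add A (cmp A g f) (cmp A g' f)) \<and>
        (\<forall>f\<in>hom A X Y. \<forall>f'\<in>hom A X Y. \<forall>g\<in>hom A Y Z.
            cmp A g (add A f f') = add A (cmp A g f) (cmp A g f'))"
    using bspec[OF bspec[OF bspec[OF conjunct2[OF is_preadditive[unfolded preadditive_def]]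
          assms(1)] assms(2)] assms(3)] .
  then show "cmp A (add A g g') f = add A (cmp A g f) (cmp A g' f)"
    "cmp A g (add A f f') = add A (cmp A g f) (cmp A g f')"
    using assms(4-7) by (auto simp del: in_hom_iff)
qed

lemma cmp_add_left:
  "f \<in> ar A \<Longrightarrow> g \<in> ar A \<Longrightarrow> g' \<in> ar A \<Longrightarrow> tgt A f = src A g \<Longrightarrow> src A g = src A g' \<Longrightarrow>
   tgt A g = tgt A g' \<Longrightarrow> cmp A (add A g g') f = add A (cmp A g f) (cmp A g' f)"
  by (rule preadditive_bilinear(1)[of "src A f" "tgt A f" "tgt A g"]) auto

lemma cmp_add_right:
  "f \<in> ar A \<Longrightarrow> f' \<in> ar A \<Longrightarrow> g \<in> ar A \<Longrightarrow> tgt A f = src A g \<Longrightarrow> src A f = src A f' \<Longrightarrow>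
   tgt A f = tgt A f' \<Longrightarrow> cmp A g (add A f f') = add A (cmp A g f) (cmp A g f')"
  by (rule preadditive_bilinear(2)[of "src A f" "tgt A f" "tgt A g"]) auto

lemma zer_if_add_self_eq: "x \<in> ar A \<Longrightarrow> add A x x = x \<Longrightarrow> x = zer A (src A x) (tgt A x)"
proof -
  assume x: "x \<in> ar A" "add A x x = x"
  have "x = add A x (add A x (neg A x))" using x by simp
  also have "\<dots> = add A (add A x x) (neg A x)" by (rule add_assoc[symmetric]) (use x in auto)
  also have "\<dots> = zer A (src A x) (tgt A x)" using x by simp
  finally show ?thesis .
qed

lemma cmp_zer_right [simp]: "g \<in> ar A \<Longrightarrow> X \<in> ob A \<Longrightarrow> Y = src A g \<Longrightarrow> cmp A g (zer A X Y) = zer A X (tgt A g)"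
proof -
  assume a: "g \<in> ar A" "X \<in> ob A" "Y = src A g"
  have "add A (cmp A g (zer A X Y)) (cmp A g (zer A X Y)) = cmp A g (add A (zer A X Y) (zer A X Y))"
    by (rule cmp_add_right[symmetric]) (use a in auto)
  then show ?thesis using zer_if_add_self_eq[of "cmp A g (zer A X Y)"] a by simp
qed

lemma cmp_zer_left [simp]: "f \<in> ar A \<Longrightarrow> Z \<in> ob A \<Longrightarrow> Y = tgt A f \<Longrightarrow> cmp A (zer A Y Z) f = zer A (src A f) Z"
proof -
  assume a: "f \<in> ar A" "Z \<in> ob A" "Y = tgt A f"
  have "add A (cmp A (zer A Y Z) f) (cmp A (zer A Y Z) f) = cmp A (add A (zer A Y Z) (zer A Y Z)) f"
    by (rule cmp_add_left[symmetric]) (use a in auto)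
  then show ?thesis using zer_if_add_self_eq[of "cmp A (zer A Y Z) f"] a by simp
qed

lemma neg_unique:
  "a \<in> ar A \<Longrightarrow> b \<in> ar A \<Longrightarrow> src A a = src A b \<Longrightarrow> tgt A a = tgt A b \<Longrightarrow>
   add A a b = zer A (src A a) (tgt A a) \<Longrightarrow> b = neg A a"
proof -
  assume a: "a \<in> ar A" "b \<in> ar A" "src A a = src A b" "tgt A a = tgt A b"
    "add A a b = zer A (src A a) (tgt A a)"
  have "b = add A b (add A a (neg A a))" using a by simp
  also have "\<dots> = add A (add A b a) (neg A a)" by (rule add_assoc[symmetric]) (use a in auto)
  also have "\<dots> = add A (add A a b) (neg A a)" using a by (simp add: add_commute[of b a])
  also have "\<dots> = neg A a" using a(1,3,4) by (simp only: a(5)) simp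
  finally show ?thesis .
qed

lemma neg_zer [simp]: "X \<in> ob A \<Longrightarrow> Y \<in> ob A \<Longrightarrow> neg A (zer A X Y) = zer A X Y"
  by (rule neg_unique[symmetric]) auto

lemma eq_if_add_neg_eq_zer:
  "a \<in> ar A \<Longrightarrow> b \<in> ar A \<Longrightarrow> src A a = src A b \<Longrightarrow> tgt A a = tgt A b \<Longrightarrow>
   add A a (neg A b) = zer A (src A a) (tgt A a) \<Longrightarrow> a = b"
proof -
  assume a: "a \<in> ar A" "b \<in> ar A" "src A a = src A b" "tgt A a = tgt A b"
    "add A a (neg A b) = zer A (src A a) (tgt A a)"
  have "add A (neg A b) a = zer A (src A (neg A b)) (tgt A (neg A b))"
    using a by (simp add: add_commute[of "neg A b" a])
  then have "a = neg A (neg A b)" using a by (intro neg_unique) auto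
  moreover have "b = neg A (neg A b)"
    using a(2) add_commute[of "neg A b" b] by (intro neg_unique) auto
  ultimately show ?thesis by simp
qed

lemma cmp_neg_right: "f \<in> ar A \<Longrightarrow> g \<in> ar A \<Longrightarrow> tgt A f = src A g \<Longrightarrow> cmp A g (neg A f) = neg A (cmp A g f)"
proof -
  assume a: "f \<in> ar A" "g \<in> ar A" "tgt A f = src A g"
  have "add A (cmp A g f) (cmp A g (neg A f)) = cmp A g (add A f (neg A f))"
    by (rule cmp_add_right[symmetric]) (use a in auto)
  then show ?thesis using a by (intro neg_unique) auto
qed

lemma cmp_neg_left: "f \<in> ar A \<Longrightarrow> g \<in> ar A \<Longrightarrow> tgt A f = src A g \<Longrightarrow> cmp A (neg A g) f = neg A (cmp A g f)"
proof -
  assume a: "f \<in> ar A" "g \<in> ar A" "tgt A f = src A g"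
  have "add A (cmp A g f) (cmp A (neg A g) f) = cmp A (add A g (neg A g)) f"
    by (rule cmp_add_left[symmetric]) (use a in auto)
  then show ?thesis using a by (intro neg_unique) auto
qed

lemma add_neg_cancel_left:
  "a \<in> ar A \<Longrightarrow> b \<in> ar A \<Longrightarrow> src A a = src A b \<Longrightarrow> tgt A a = tgt A b \<Longrightarrow> add A a (add A b (neg A a)) = b"
proof -
  assume a: "a \<in> ar A" "b \<in> ar A" "src A a = src A b" "tgt A a = tgt A b"
  have "add A a (add A b (neg A a)) = add A a (add A (neg A a) b)"
    using a by (simp add: add_commute[of b "neg A a"])
  also have "\<dots> = add A (add A a (neg A a)) b" by (rule add_assoc[symmetric]) (use a in auto)
  also have "\<dots> = b" using a by simp
  finally show ?thesis .
qed

lemma section_cancel: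
  "cmp A t k = idn A (src A k) \<Longrightarrow> t \<in> ar A \<Longrightarrow> k \<in> ar A \<Longrightarrow> tgt A k = src A t \<Longrightarrow>
   x \<in> ar A \<Longrightarrow> tgt A x = src A k \<Longrightarrow> cmp A t (cmp A k x) = x"
  by (metis cmp_assoc cmp_idn_left)

lemma section_imp_mono: "is_section A m \<Longrightarrow> mono A m"
proof -
  assume "is_section A m"
  then obtain r where m: "m \<in> ar A" and r: "r \<in> hom A (tgt A m) (src A m)" "cmp A r m = idn A (src A m)"
    unfolding is_section_def by blast
  have "g = h" if "g \<in> ar A" "h \<in> ar A" "tgt A g = src A m" "tgt A h = src A m" "cmp A m g = cmp A m h" for g h
  proof -
    have "g = cmp A r (cmp A m g)" using section_cancel[OF r(2), of g] r(1) m that by auto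
    also have "\<dots> = cmp A r (cmp A m h)" by (simp only: that(5))
    also have "\<dots> = h" using section_cancel[OF r(2), of h] r(1) m that by auto
    finally show ?thesis .
  qed
  then show "mono A m" unfolding mono_def using m by blast
qed

lemma mono_cancel:
  "mono A m \<Longrightarrow> g \<in> ar A \<Longrightarrow> h \<in> ar A \<Longrightarrow> tgt A g = src A m \<Longrightarrow> tgt A h = src A m \<Longrightarrow>
   src A g = src A h \<Longrightarrow> cmp A m g = cmp A m h \<Longrightarrow> g = h"
  unfolding mono_def by blast

lemma epi_cancel:
  "epi A e \<Longrightarrow> g \<in> ar A \<Longrightarrow> h \<in> ar A \<Longrightarrow> src A g = tgt A e \<Longrightarrow> src A h = tgt A e \<Longrightarrow>
   tgt A g = tgt A h \<Longrightarrow> cmp A g e = cmp A h e \<Longrightarrow> g = h"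
  unfolding epi_def by blast

lemma cokernel_factor:
  assumes "is_cokernel A c y" "g \<in> ar A" "src A g = tgt A y" "cmp A g y = zer A (src A y) (tgt A g)"
  obtains u where "u \<in> hom A (tgt A c) (tgt A g)" "cmp A u c = g"
proof -
  have "\<forall>g\<in>ar A. src A g = tgt A y \<and> cmp A g y = zer A (src A y) (tgt A g) \<longrightarrow>
        (\<exists>!u. u \<in> hom A (tgt A c) (tgt A g) \<and> cmp A u c = g)"
    using assms(1) unfolding is_cokernel_def by (elim conjE)
  from this[rule_format, OF assms(2)] assms(3,4) that show ?thesis by blast
qed

lemma kernel_exists: "f \<in> ar A \<Longrightarrow> \<exists>k. is_kernel A k f"
  and cokernel_exists: "f \<in> ar A \<Longrightarrow> \<exists>c. is_cokernel A c f"
  and mono_is_kernel: "mono A m \<Longrightarrow> \<exists>f. is_kernel A m f"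
  using abelian unfolding abelian_def by blast+

section \<open>Subobjects\<close>

lemma subobj_le_cmp: "b \<in> ar A \<Longrightarrow> u \<in> ar A \<Longrightarrow> tgt A u = src A b \<Longrightarrow> subobj_le A (cmp A b u) b"
  unfolding subobj_le_def by (rule bexI[of _ u]) simp_all

lemma subobj_le_refl: "a \<in> ar A \<Longrightarrow> subobj_le A a a"
  using subobj_le_cmp[of a "idn A (src A a)"] by simp

lemma subobj_le_tgt: "subobj_le A a b \<Longrightarrow> b \<in> ar A \<Longrightarrow> a \<in> ar A \<and> tgt A a = tgt A b"
  unfolding subobj_le_def by (elim bexE) simp

lemma subobj_leE:
  assumes "subobj_le A a b" "b \<in> ar A"
  obtains u where "u \<in> ar A" "tgt A u = src A b" "a = cmp A b u"
  using assms unfolding subobj_le_def by auto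

lemma subobj_le_precomp:
  assumes "subobj_le A a b" "b \<in> ar A" "x \<in> ar A" "tgt A x = src A a"
  shows "subobj_le A (cmp A a x) b"
proof -
  obtain u where "u \<in> ar A" "tgt A u = src A b" "a = cmp A b u"
    using assms(1,2) by (rule subobj_leE)
  then show ?thesis using assms(2-4) subobj_le_cmp[of b "cmp A u x"] by simp
qed

lemma subobj_le_trans:
  assumes "subobj_le A a b" "subobj_le A b c" "c \<in> ar A"
  shows "subobj_le A a c"
proof -
  have "b \<in> ar A" using subobj_le_tgt[OF assms(2,3)] by simp
  with assms(1) obtain u where "u \<in> ar A" "tgt A u = src A b" "a = cmp A b u" by (rule subobj_leE)
  then show ?thesis using subobj_le_precomp[OF assms(2,3), of u] by simp
qed

lemma subobj_le_add:
  assumes "subobj_le A a m" "subobj_le A b m" "m \<in> ar A" "src A a = src A b"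
  shows "subobj_le A (add A a b) m"
proof -
  obtain u where u: "u \<in> ar A" "tgt A u = src A m" "a = cmp A m u" using assms(1,3) by (rule subobj_leE)
  obtain v where v: "v \<in> ar A" "tgt A v = src A m" "b = cmp A m v" using assms(2,3) by (rule subobj_leE)
  have "src A u = src A v" using u v assms(3,4) by simp
  then have "add A a b = cmp A m (add A u v)" using u v assms(3) by (simp add: cmp_add_right)
  then show ?thesis using u v assms(3) \<open>src A u = src A v\<close> subobj_le_cmp[of m "add A u v"] by simp
qed

lemma subobj_le_neg:
  assumes "subobj_le A a m" "m \<in> ar A"
  shows "subobj_le A (neg A a) m"
proof -
  obtain u where "u \<in> ar A" "tgt A u = src A m" "a = cmp A m u" using assms by (rule subobj_leE)
  then show ?thesis using assms(2) subobj_le_cmp[of m "neg A u"] by (simp add: cmp_neg_right)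
qed

lemma subobj_le_kernel_iff:
  assumes "is_kernel A \<kappa> g" "x \<in> ar A" "tgt A x = src A g"
  shows "subobj_le A x \<kappa> \<longleftrightarrow> cmp A g x = zer A (src A x) (tgt A g)"
proof
  assume "subobj_le A x \<kappa>"
  moreover have "\<kappa> \<in> ar A" using assms(1) unfolding is_kernel_def by blast
  ultimately obtain u where "u \<in> ar A" "tgt A u = src A \<kappa>" "x = cmp A \<kappa> u" by (rule subobj_leE)
  then show "cmp A g x = zer A (src A x) (tgt A g)"
    using assms(1) unfolding is_kernel_def by (auto simp flip: cmp_assoc)
next
  assume "cmp A g x = zer A (src A x) (tgt A g)"
  then show "subobj_le A x \<kappa>"
    using assms unfolding is_kernel_def subobj_le_def by (metis (no_types, lifting))
qed

lemma fully_invariant_mono_iff: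
  "fully_invariant_mono A m \<longleftrightarrow> mono A m \<and> (\<forall>h\<in>hom A (tgt A m) (tgt A m). subobj_le A (cmp A h m) m)"
  unfolding fully_invariant_mono_def subobj_le_def mono_def by auto

lemma fully_invariant_mono_le:
  assumes "fully_invariant_mono A \<kappa>" "subobj_le A x \<kappa>" "h \<in> hom A (tgt A \<kappa>) (tgt A \<kappa>)"
  shows "subobj_le A (cmp A h x) \<kappa>"
proof -
  have \<kappa>: "\<kappa> \<in> ar A" using assms(1) unfolding fully_invariant_mono_def mono_def by blast
  obtain u where u: "u \<in> ar A" "tgt A u = src A \<kappa>" "x = cmp A \<kappa> u" using assms(2) \<kappa> by (rule subobj_leE)
  have "subobj_le A (cmp A (cmp A h \<kappa>) u) \<kappa>"
    using assms(1,3) u \<kappa> subobj_le_precomp[of "cmp A h \<kappa>" \<kappa> u]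
    by (auto simp: fully_invariant_mono_iff)
  then show ?thesis using u assms(3) \<kappa> by simp
qed

lemma is_kernel_cong:
  assumes "is_kernel A \<kappa> f" "g \<in> ar A" "src A g = src A f"
    and "\<And>x. x \<in> ar A \<Longrightarrow> tgt A x = src A f \<Longrightarrow>
      cmp A f x = zer A (src A x) (tgt A f) \<longleftrightarrow> cmp A g x = zer A (src A x) (tgt A g)"
  shows "is_kernel A \<kappa> g"
proof -
  have "\<kappa> \<in> ar A" "tgt A \<kappa> = src A f" "cmp A f \<kappa> = zer A (src A \<kappa>) (tgt A f)"
    using assms(1) unfolding is_kernel_def by blast+
  then show ?thesis using assms unfolding is_kernel_def by (simp (no_asm_use)) metis
qed

lemma is_kernel_if_kernel_comp:
  assumes "is_kernel A i d" "subobj_le A i n" and n: "n \<in> ar A"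
    and s: "s \<in> hom A (tgt A n) (src A n)" "cmp A s n = idn A (src A n)"
    and g: "g \<in> hom A (tgt A n) (tgt A n)" "cmp A s g = zer A (tgt A n) (src A n)"
    and "is_kernel A \<kappa> (cmp A d g)"
  shows "is_kernel A \<kappa> g"
proof (rule is_kernel_cong[OF assms(8)])
  have d: "d \<in> ar A" "src A d = tgt A i" using assms(1) unfolding is_kernel_def by auto
  have "tgt A i = tgt A n" using subobj_le_tgt[OF assms(2) n] by simp
  then have dg: "cmp A d g \<in> ar A" "src A (cmp A d g) = tgt A n" "tgt A (cmp A d g) = tgt A d"
    using d g by auto
  show "g \<in> ar A" "src A g = src A (cmp A d g)" using g dg by auto
  fix x assume x: "x \<in> ar A" "tgt A x = src A (cmp A d g)"
  show "cmp A (cmp A d g) x = zer A (src A x) (tgt A (cmp A d g)) \<longleftrightarrow>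
        cmp A g x = zer A (src A x) (tgt A g)"
  proof
    assume "cmp A (cmp A d g) x = zer A (src A x) (tgt A (cmp A d g))"
    then have "subobj_le A (cmp A g x) i"
      using x g dg \<open>tgt A i = tgt A n\<close> d by (subst subobj_le_kernel_iff[OF assms(1)]) auto
    then have "subobj_le A (cmp A g x) n" using assms(2) n by (rule subobj_le_trans)
    then obtain v where v: "v \<in> ar A" "tgt A v = src A n" "cmp A g x = cmp A n v" using n by (rule subobj_leE)
    have "v = cmp A s (cmp A g x)" using section_cancel[OF s(2)] s(1) n v by simp
    also have "\<dots> = zer A (src A x) (src A n)" using x g dg s n by (simp flip: cmp_assoc)
    finally show "cmp A g x = zer A (src A x) (tgt A g)" using v n g x by simp
  qed (use x g d \<open>tgt A i = tgt A n\<close> in simp)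
qed

section \<open>Complements of summands\<close>

definition residual :: "'m \<Rightarrow> 'm \<Rightarrow> 'm \<Rightarrow> 'm" where
  "residual n s f = add A f (neg A (cmp A n (cmp A s f)))"

context
  fixes n s :: 'm
  assumes n: "n \<in> ar A" and s: "s \<in> hom A (tgt A n) (src A n)"
begin

lemma residual_in_ar [simp]: "f \<in> ar A \<Longrightarrow> tgt A f = tgt A n \<Longrightarrow> residual n s f \<in> ar A"
  and src_residual [simp]: "f \<in> ar A \<Longrightarrow> tgt A f = tgt A n \<Longrightarrow> src A (residual n s f) = src A f"
  and tgt_residual [simp]: "f \<in> ar A \<Longrightarrow> tgt A f = tgt A n \<Longrightarrow> tgt A (residual n s f) = tgt A f"
  using n s unfolding residual_def by auto

lemma residual_cmp:
  "f \<in> ar A \<Longrightarrow> tgt A f = tgt A n \<Longrightarrow> x \<in> ar A \<Longrightarrow> tgt A x = src A f \<Longrightarrow>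
   cmp A (residual n s f) x = residual n s (cmp A f x)"
  using n s unfolding residual_def by (simp add: cmp_add_left cmp_neg_left)

lemma residual_eq_zer_iff:
  "f \<in> ar A \<Longrightarrow> tgt A f = tgt A n \<Longrightarrow>
   residual n s f = zer A (src A f) (tgt A f) \<longleftrightarrow> f = cmp A n (cmp A s f)"
  using n s eq_if_add_neg_eq_zer[of f "cmp A n (cmp A s f)"] unfolding residual_def by auto

lemma retraction_cmp_residual:
  assumes "cmp A s n = idn A (src A n)" "f \<in> ar A" "tgt A f = tgt A n"
  shows "cmp A s (residual n s f) = zer A (src A f) (src A n)"
proof -
  have "cmp A s (residual n s f) = add A (cmp A s f) (neg A (cmp A s (cmp A n (cmp A s f))))"
    using n s assms(2,3) unfolding residual_def by (simp add: cmp_add_right cmp_neg_right)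
  also have "\<dots> = zer A (src A f) (src A n)"
    using section_cancel[OF assms(1), of "cmp A s f"] n s assms(2,3) by simp
  finally show ?thesis .
qed

lemma residual_eq_self:
  "f \<in> ar A \<Longrightarrow> tgt A f = tgt A n \<Longrightarrow> cmp A s f = zer A (src A f) (src A n) \<Longrightarrow> residual n s f = f"
  using n s unfolding residual_def by simp

lemma residual_le:
  assumes "subobj_le A x m" "subobj_le A n m" "m \<in> ar A"
  shows "subobj_le A (residual n s x) m"
proof -
  have x: "x \<in> ar A" "tgt A x = tgt A m" using subobj_le_tgt[OF assms(1,3)] by auto
  have "tgt A n = tgt A m" using subobj_le_tgt[OF assms(2,3)] by simp
  then have "subobj_le A (cmp A n (cmp A s x)) m"
    using subobj_le_precomp[OF assms(2,3), of "cmp A s x"] n s x by simp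
  then show ?thesis
    unfolding residual_def using assms(1,3) n s x \<open>tgt A n = tgt A m\<close>
    by (intro subobj_le_add subobj_le_neg) simp_all
qed

end

lemma residual_le_if_cokernel_retraction:
  assumes c: "is_cokernel A c y" "\<sigma> \<in> hom A (tgt A c) (src A c)" "cmp A c \<sigma> = idn A (tgt A c)"
    and m: "mono A m" "tgt A m = src A c" "subobj_le A y m"
    and x: "x \<in> ar A" "tgt A x = src A c"
  shows "subobj_le A (residual \<sigma> c x) m"
proof -
  obtain f where f: "is_kernel A m f" using mono_is_kernel[OF m(1)] by blast
  have c': "c \<in> ar A" "y \<in> ar A" "src A c = tgt A y" using c(1) unfolding is_cokernel_def by auto
  have f': "f \<in> ar A" "src A f = src A c" using f m(2) unfolding is_kernel_def by auto
  have "src A f = tgt A y" using c' f' by simp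
  moreover have "cmp A f y = zer A (src A y) (tgt A f)"
    using subobj_le_kernel_iff[OF f, of y] m(3) c' f' by simp
  ultimately obtain f'' where f'': "f'' \<in> hom A (tgt A c) (tgt A f)" "cmp A f'' c = f"
    using cokernel_factor[OF c(1) f'(1)] by blast
  have f''_ar: "f'' \<in> ar A" "src A f'' = tgt A c" using f''(1) by simp_all
  have "cmp A f (cmp A \<sigma> (cmp A c x)) = cmp A (cmp A f'' c) (cmp A \<sigma> (cmp A c x))"
    by (simp only: f''(2))
  also have "\<dots> = cmp A f'' (cmp A c x)"
    using section_cancel[of c \<sigma> "cmp A c x"] c(2,3) f''_ar c' x by simp
  also have "\<dots> = cmp A (cmp A f'' c) x" using f''_ar c' x by simp
  also have "\<dots> = cmp A f x" by (simp only: f''(2))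
  finally have "cmp A f (residual \<sigma> c x) = zer A (src A x) (tgt A f)"
    unfolding residual_def using c(2) c' x f' by (simp add: cmp_add_right cmp_neg_right)
  then show ?thesis
    using subobj_le_kernel_iff[OF f, of "residual \<sigma> c x"] c(2) c' x f' by simp
qed

section \<open>Intersections with a summand\<close>

context
  fixes k n p1 p2 :: 'm
  assumes pullback: "is_pullback A k n p1 p2"
begin

lemma pullback_arrows:
  "k \<in> ar A" "n \<in> ar A" "tgt A k = tgt A n" "p1 \<in> ar A" "p2 \<in> ar A"
  "src A p2 = src A p1" "tgt A p1 = src A k" "tgt A p2 = src A n" "cmp A k p1 = cmp A n p2"
  using pullback unfolding is_pullback_def by auto

lemma pullback_factor:
  assumes "a \<in> ar A" "b \<in> ar A" "tgt A a = src A k" "tgt A b = src A n" "src A a = src A b"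
    "cmp A k a = cmp A n b"
  shows "\<exists>!u. u \<in> hom A (src A a) (src A p1) \<and> cmp A p1 u = a \<and> cmp A p2 u = b"
proof -
  have "\<forall>a\<in>ar A. \<forall>b\<in>ar A. tgt A a = src A k \<and> tgt A b = src A n \<and> src A a = src A b \<and>
        cmp A k a = cmp A n b \<longrightarrow>
        (\<exists>!u. u \<in> hom A (src A a) (src A p1) \<and> cmp A p1 u = a \<and> cmp A p2 u = b)"
    using pullback unfolding is_pullback_def by (elim conjE)
  from this[rule_format, OF assms(1,2)] show ?thesis using assms(3-6) by blast
qed

lemma intersection_le: "subobj_le A (cmp A k p1) k" "subobj_le A (cmp A k p1) n"
  using pullback_arrows subobj_le_cmp[of k p1] subobj_le_cmp[of n p2] by auto

lemma le_intersection:
  assumes "subobj_le A x k" "subobj_le A x n"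
  shows "subobj_le A x (cmp A k p1)"
proof -
  obtain a where a: "a \<in> ar A" "tgt A a = src A k" "x = cmp A k a"
    using assms(1) pullback_arrows(1) by (rule subobj_leE)
  obtain b where b: "b \<in> ar A" "tgt A b = src A n" "x = cmp A n b"
    using assms(2) pullback_arrows(2) by (rule subobj_leE)
  have "src A a = src A b" using a b pullback_arrows by (metis src_cmp)
  then have "\<exists>!u. u \<in> hom A (src A a) (src A p1) \<and> cmp A p1 u = a \<and> cmp A p2 u = b"
    using a b by (intro pullback_factor) auto
  then obtain u where "u \<in> hom A (src A a) (src A p1)" "cmp A p1 u = a" by blast
  moreover have "x = cmp A (cmp A k p1) u" using a \<open>cmp A p1 u = a\<close> \<open>u \<in> hom A _ _\<close> pullback_arrows(1-8) by simp
  ultimately show ?thesis using pullback_arrows(1-8) subobj_le_cmp[of "cmp A k p1" u] by simp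
qed

lemma intersection_mono:
  assumes "mono A k" "mono A n"
  shows "mono A (cmp A k p1)"
  unfolding mono_def
proof (intro conjI ballI impI; (elim conjE)?)
  note pb = pullback_arrows
  show "cmp A k p1 \<in> ar A" using pb by simp
  fix a b assume ab: "a \<in> ar A" "b \<in> ar A" "tgt A a = src A (cmp A k p1)" "tgt A b = src A (cmp A k p1)"
    "src A a = src A b" "cmp A (cmp A k p1) a = cmp A (cmp A k p1) b"
  have ab': "tgt A a = src A p1" "tgt A b = src A p1" using ab(3,4) pb by simp_all
  have "cmp A k (cmp A p1 a) = cmp A k (cmp A p1 b)" using ab(1,2,6) ab' pb(1-8) by simp
  then have 1: "cmp A p1 a = cmp A p1 b"
    using assms(1) ab(1,2,5) ab' pb unfolding mono_def by simp
  have p2_eq: "cmp A n (cmp A p2 c) = cmp A k (cmp A p1 c)" if "c \<in> ar A" "tgt A c = src A p1" for c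
    using that pb(1-8) pb(9)[symmetric] by (simp flip: cmp_assoc)
  have "cmp A n (cmp A p2 a) = cmp A n (cmp A p2 b)"
    using 1 ab(1,2) ab' by (simp add: p2_eq)
  then have 2: "cmp A p2 a = cmp A p2 b"
    using assms(2) ab(1,2,5) ab' pb unfolding mono_def by simp
  have "cmp A k (cmp A p1 a) = cmp A n (cmp A p2 a)" using ab(1) ab' by (simp add: p2_eq)
  then have "\<exists>!u. u \<in> hom A (src A a) (src A p1) \<and> cmp A p1 u = cmp A p1 a \<and> cmp A p2 u = cmp A p2 a"
    using ab(1) ab' pb(1-8) pullback_factor[of "cmp A p1 a" "cmp A p2 a"] by simp
  then show "a = b" using 1 2 ab ab' by auto
qed

end

context
  fixes k t n s p1 p2 :: 'm
  assumes pullback: "is_pullback A k n p1 p2"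
    and t: "t \<in> hom A (tgt A k) (src A k)" "cmp A t k = idn A (src A k)"
    and s: "s \<in> hom A (tgt A n) (src A n)" "cmp A s n = idn A (src A n)"
begin

lemma residual_cmp_eq_zer_iff:
  assumes "subobj_le A x k"
  shows "cmp A (residual n s (cmp A k t)) x = zer A (src A x) (tgt A k) \<longleftrightarrow> subobj_le A x n"
proof -
  note pb = pullback_arrows[OF pullback]
  obtain a where a: "a \<in> ar A" "tgt A a = src A k" "x = cmp A k a"
    using assms pb(1) by (rule subobj_leE)
  have x: "x \<in> ar A" "tgt A x = tgt A n" using a pb by simp_all
  have "cmp A (cmp A k t) x = x" using a t pb by (simp add: section_cancel)
  then have "cmp A (residual n s (cmp A k t)) x = residual n s x"
    using x t pb by (simp add: residual_cmp[OF pb(2) s(1)])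
  also have "\<dots> = zer A (src A x) (tgt A k) \<longleftrightarrow> x = cmp A n (cmp A s x)"
    using residual_eq_zer_iff[OF pb(2) s(1) x] x pb by simp
  also have "\<dots> \<longleftrightarrow> subobj_le A x n"
  proof
    assume "subobj_le A x n"
    then obtain v where "v \<in> ar A" "tgt A v = src A n" "x = cmp A n v" using pb(2) by (rule subobj_leE)
    then show "x = cmp A n (cmp A s x)" using s pb by (simp add: section_cancel)
  qed (use x s pb subobj_le_cmp[of n "cmp A s x"] in auto)
  finally show ?thesis .
qed

lemma intersection_le_kernel:
  assumes "is_kernel A \<kappa> (residual n s (cmp A k t))"
  shows "subobj_le A (cmp A k p1) \<kappa>"
proof -
  note pb = pullback_arrows[OF pullback]
  have "cmp A (residual n s (cmp A k t)) (cmp A k p1) = zer A (src A p1) (tgt A k)"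
    using residual_cmp_eq_zer_iff[of "cmp A k p1"] intersection_le[OF pullback] pb(1-8) by simp
  then show ?thesis using assms t s pb(1-8) by (subst subobj_le_kernel_iff) auto
qed

lemma intersection_of_summands_mono: "mono A (cmp A k p1)"
proof -
  note pb = pullback_arrows[OF pullback]
  have "is_section A k" "is_section A n" using t s pb unfolding is_section_def by auto
  then show ?thesis using intersection_mono[OF pullback] section_imp_mono by blast
qed

lemma kernel_projection_le_intersection:
  assumes kernel: "is_kernel A \<kappa> (residual n s (cmp A k t))"
  shows "subobj_le A (cmp A k (cmp A t \<kappa>)) (cmp A k p1)"
proof -
  note pb = pullback_arrows[OF pullback]
  define g where "g = residual n s (cmp A k t)"
  have g: "g \<in> ar A" "src A g = tgt A k" "tgt A g = tgt A k"
    using t s pb(1-8) unfolding g_def by simp_all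
  have \<kappa>: "\<kappa> \<in> ar A" "tgt A \<kappa> = tgt A k" "cmp A g \<kappa> = zer A (src A \<kappa>) (tgt A k)"
    using kernel g unfolding g_def[symmetric] is_kernel_def by auto
  have "cmp A g (cmp A k t) = g"
    using t s pb(1-8) section_cancel[OF t(2)] unfolding g_def by (simp add: residual_cmp)
  then have "cmp A g (cmp A k (cmp A t \<kappa>)) = cmp A g \<kappa>" using g t \<kappa> pb(1-8) by (simp flip: cmp_assoc)
  moreover have "subobj_le A (cmp A k (cmp A t \<kappa>)) k" using t \<kappa> pb(1) subobj_le_cmp by simp
  ultimately have "subobj_le A (cmp A k (cmp A t \<kappa>)) n"
    using residual_cmp_eq_zer_iff[of "cmp A k (cmp A t \<kappa>)"] \<kappa> t pb(1) unfolding g_def[symmetric] by simp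
  then show ?thesis using \<open>subobj_le A _ k\<close> le_intersection[OF pullback] by blast
qed

lemma intersection_section_if_kernel_section:
  assumes kernel: "is_kernel A \<kappa> (residual n s (cmp A k t))" and "is_section A \<kappa>"
  shows "is_section A (cmp A k p1)"
proof -
  note pb = pullback_arrows[OF pullback]
  define m where "m = cmp A k p1"
  have \<kappa>: "\<kappa> \<in> ar A" "tgt A \<kappa> = tgt A k"
    using kernel t s pb(1-8) unfolding is_kernel_def by auto
  obtain \<rho> where \<rho>: "\<rho> \<in> hom A (tgt A \<kappa>) (src A \<kappa>)" "cmp A \<rho> \<kappa> = idn A (src A \<kappa>)"
    using assms(2) unfolding is_section_def by blast
  obtain w where w: "w \<in> ar A" "tgt A w = src A \<kappa>" "m = cmp A \<kappa> w"
    using intersection_le_kernel[OF kernel] \<kappa>(1) unfolding m_def[symmetric] by (rule subobj_leE)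
  have m: "m \<in> ar A" "src A m = src A p1" "tgt A m = tgt A k" using pb(1-8) unfolding m_def by auto
  obtain z where z: "z \<in> ar A" "tgt A z = src A m" "cmp A k (cmp A t \<kappa>) = cmp A m z"
    using kernel_projection_le_intersection[OF kernel] m(1) unfolding m_def[symmetric] by (rule subobj_leE)
  have src_z: "src A z = src A \<kappa>"
    using z(1,2) m \<kappa> t pb(1) arg_cong[OF z(3), of "src A"] by simp
  have "cmp A m (cmp A z w) = cmp A k (cmp A t (cmp A \<kappa> w))"
    using z w(1,2) m \<kappa> t pb(1) src_z by (simp flip: cmp_assoc z(3))
  also have "\<dots> = cmp A m (idn A (src A m))"
    using section_cancel[OF t(2)] t pb(1-8) m unfolding w(3)[symmetric] m_def by simp
  finally have "cmp A z w = idn A (src A m)"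
    using w z src_z m pb(4) \<kappa>
    by (intro mono_cancel[OF intersection_of_summands_mono[folded m_def], of "cmp A z w"]) simp_all
  then have "cmp A (cmp A z \<rho>) m = idn A (src A m)"
    using z w \<rho> \<kappa> src_z section_cancel[OF \<rho>(2)] by simp
  moreover have "cmp A z \<rho> \<in> hom A (tgt A m) (src A m)" using z \<rho> \<kappa> m src_z by simp
  ultimately show ?thesis using m unfolding is_section_def m_def[symmetric] by blast
qed

lemma intersection_fully_invariant_if_kernel_fully_invariant:
  assumes kernel: "is_kernel A \<kappa> (residual n s (cmp A k t))"
    and "fully_invariant_mono A \<kappa>" "fully_invariant_mono A k"
  shows "fully_invariant_mono A (cmp A k p1)"
  unfolding fully_invariant_mono_iff
proof (intro conjI ballI intersection_of_summands_mono)
  note pb = pullback_arrows[OF pullback]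
  fix h assume h: "h \<in> hom A (tgt A (cmp A k p1)) (tgt A (cmp A k p1))"
  have \<kappa>: "\<kappa> \<in> ar A" "tgt A \<kappa> = tgt A k"
    using kernel t s pb(1-8) unfolding is_kernel_def by auto
  have hm: "cmp A h (cmp A k p1) \<in> ar A" "tgt A (cmp A h (cmp A k p1)) = tgt A k"
    using h pb(1-8) by auto
  have "subobj_le A (cmp A h (cmp A k p1)) k"
    using fully_invariant_mono_le[OF assms(3) intersection_le(1)[OF pullback]] h pb(1-8) by simp
  moreover have "subobj_le A (cmp A h (cmp A k p1)) \<kappa>"
    using fully_invariant_mono_le[OF assms(2) intersection_le_kernel[OF kernel]] h \<kappa> pb(1-8) by simp
  then have "cmp A (residual n s (cmp A k t)) (cmp A h (cmp A k p1)) = zer A (src A p1) (tgt A k)"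
    using subobj_le_kernel_iff[OF kernel] hm h t s pb(1-8) by simp
  ultimately show "subobj_le A (cmp A h (cmp A k p1)) (cmp A k p1)"
    using residual_cmp_eq_zer_iff[of "cmp A h (cmp A k p1)"]
      le_intersection[OF pullback, of "cmp A h (cmp A k p1)"] h pb(1-8) by auto
qed

end

section \<open>Sums with a summand\<close>

context
  fixes k n m :: 'm
  assumes sum: "is_sum A k n m" and k: "k \<in> ar A" and n: "n \<in> ar A" "tgt A n = tgt A k"
begin

lemma sumE:
  obtains P p1 p2 j1 j2 e where "is_biproduct A (src A k) (src A n) P p1 p2 j1 j2"
    "mono A m" "tgt A m = tgt A k" "epi A e" "e \<in> hom A P (src A m)"
    "cmp A m e = add A (cmp A k p1) (cmp A n p2)"
  using sum unfolding is_sum_def by blast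

lemma sum_mono: "mono A m" and sum_arrow: "m \<in> ar A" "tgt A m = tgt A k"
  by (rule sumE; simp add: mono_def)+

lemma le_sum: "subobj_le A k m" "subobj_le A n m"
proof -
  obtain P p1 p2 j1 j2 e where bp: "is_biproduct A (src A k) (src A n) P p1 p2 j1 j2"
    and e: "e \<in> hom A P (src A m)" and me: "cmp A m e = add A (cmp A k p1) (cmp A n p2)"
    by (rule sumE)
  have p: "p1 \<in> hom A P (src A k)" "p2 \<in> hom A P (src A n)" "j1 \<in> hom A (src A k) P"
    "j2 \<in> hom A (src A n) P" "cmp A p1 j1 = idn A (src A k)" "cmp A p2 j2 = idn A (src A n)"
    "cmp A p1 j2 = zer A (src A n) (src A k)" "cmp A p2 j1 = zer A (src A k) (src A n)"
    using bp unfolding is_biproduct_def by auto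
  have "cmp A m (cmp A e j1) = cmp A (cmp A m e) j1" using e p sum_arrow by simp
  also have "\<dots> = k" unfolding me using p k n by (simp add: cmp_add_left)
  finally show "subobj_le A k m" using e p sum_arrow subobj_le_cmp[of m "cmp A e j1"] by simp
  have "cmp A m (cmp A e j2) = cmp A (cmp A m e) j2" using e p sum_arrow by simp
  also have "\<dots> = n" unfolding me using p k n by (simp add: cmp_add_left)
  finally show "subobj_le A n m" using e p sum_arrow subobj_le_cmp[of m "cmp A e j2"] by simp
qed

lemma sum_cmp_eq:
  assumes "x \<in> ar A" "y \<in> ar A" "src A x = tgt A k" "src A y = tgt A k" "tgt A x = tgt A y"
    "cmp A x k = cmp A y k" "cmp A x n = cmp A y n"
  shows "cmp A x m = cmp A y m"
proof -
  obtain P p1 p2 j1 j2 e where bp: "is_biproduct A (src A k) (src A n) P p1 p2 j1 j2"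
    and "epi A e" and e: "e \<in> hom A P (src A m)" and me: "cmp A m e = add A (cmp A k p1) (cmp A n p2)"
    by (rule sumE)
  have p: "p1 \<in> hom A P (src A k)" "p2 \<in> hom A P (src A n)"
    using bp unfolding is_biproduct_def by auto
  have "cmp A z (cmp A m e) = add A (cmp A (cmp A z k) p1) (cmp A (cmp A z n) p2)"
    if "z \<in> ar A" "src A z = tgt A k" for z
    unfolding me using that p k n by (simp add: cmp_add_right)
  then have xy: "cmp A (cmp A x m) e = cmp A (cmp A y m) e"
    using assms e sum_arrow by (simp flip: cmp_assoc)
  show ?thesis
    by (rule epi_cancel[OF \<open>epi A e\<close>]) (use xy assms e sum_arrow in auto)
qed

lemma sum_le:
  assumes "mono A m'" "x \<in> ar A" "src A x = tgt A k" "tgt A m' = tgt A x"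
    "subobj_le A (cmp A x k) m'" "subobj_le A (cmp A x n) m'"
  shows "subobj_le A (cmp A x m) m'"
proof -
  obtain f where f: "is_kernel A m' f" using mono_is_kernel[OF assms(1)] by blast
  have f': "f \<in> ar A" "src A f = tgt A x" using f assms(4) unfolding is_kernel_def by auto
  have "cmp A (cmp A f x) m = cmp A (zer A (tgt A k) (tgt A f)) m"
  proof (rule sum_cmp_eq)
    show "cmp A (cmp A f x) k = cmp A (zer A (tgt A k) (tgt A f)) k"
      using subobj_le_kernel_iff[OF f, of "cmp A x k"] assms(2,3,5) k f' by simp
    show "cmp A (cmp A f x) n = cmp A (zer A (tgt A k) (tgt A f)) n"
      using subobj_le_kernel_iff[OF f, of "cmp A x n"] assms(2,3,6) n f' by simp
  qed (use assms(2,3) f' k in auto)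
  then show ?thesis
    using subobj_le_kernel_iff[OF f, of "cmp A x m"] assms(2,3) f' sum_arrow by simp
qed

lemma sum_section_if_fixing:
  assumes "\<phi> \<in> ar A" "src A \<phi> = tgt A k" "tgt A \<phi> = tgt A k" "subobj_le A \<phi> m"
    "cmp A \<phi> k = k" "cmp A \<phi> n = n"
  shows "is_section A m"
proof -
  obtain \<psi> where \<psi>: "\<psi> \<in> ar A" "tgt A \<psi> = src A m" "\<phi> = cmp A m \<psi>"
    using assms(4) sum_arrow(1) by (rule subobj_leE)
  have "src A \<psi> = tgt A m" using \<psi> assms(2) sum_arrow by (metis src_cmp)
  have "cmp A \<phi> m = cmp A (idn A (tgt A k)) m"
    by (rule sum_cmp_eq) (use assms k n in simp_all)
  then have "cmp A m (cmp A \<psi> m) = cmp A m (idn A (src A m))"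
    using \<psi> \<open>src A \<psi> = tgt A m\<close> sum_arrow by (simp flip: cmp_assoc)
  then have "cmp A \<psi> m = idn A (src A m)"
    by (rule mono_cancel[OF sum_mono, rotated -1])
      (use \<psi> \<open>src A \<psi> = tgt A m\<close> sum_arrow in simp_all)
  then show ?thesis
    unfolding is_section_def using \<psi> \<open>src A \<psi> = tgt A m\<close> sum_arrow by auto
qed

end

context
  fixes i k t n s c \<sigma> m :: 'm
  assumes sum: "is_sum A k n m" and k: "k \<in> ar A" and n: "n \<in> ar A" "tgt A n = tgt A k"
    and t: "t \<in> hom A (tgt A k) (src A k)" "cmp A t k = idn A (src A k)"
    and s: "s \<in> hom A (tgt A n) (src A n)" "cmp A s n = idn A (src A n)"
    and n_le_i: "subobj_le A n i" and i: "i \<in> ar A"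
    and cokernel: "is_cokernel A c (cmp A (residual k t (cmp A n s)) i)"
    and \<sigma>: "\<sigma> \<in> hom A (tgt A c) (src A c)" "cmp A c \<sigma> = idn A (tgt A c)"
begin

lemma cokernel_arrows: "c \<in> ar A" "src A c = tgt A k" "tgt A i = tgt A k"
proof -
  show "tgt A i = tgt A k" using subobj_le_tgt[OF n_le_i i] n by simp
  moreover have "c \<in> ar A" "src A c = tgt A (cmp A (residual k t (cmp A n s)) i)"
    using cokernel unfolding is_cokernel_def by blast+
  ultimately show "c \<in> ar A" "src A c = tgt A k" using k n t s i by simp_all
qed

lemma cokernel_cmp_residual: "cmp A c (residual k t n) = zer A (src A n) (tgt A c)"
proof -
  obtain u where u: "u \<in> ar A" "tgt A u = src A i" "n = cmp A i u" using n_le_i i by (rule subobj_leE)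
  note ar = k n t s i u(1,2) cokernel_arrows
  let ?g = "residual k t (cmp A n s)"
  have "residual k t n = residual k t (cmp A (cmp A n s) n)"
    using section_cancel[OF s(2)] ar by simp
  also have "\<dots> = cmp A (cmp A ?g i) u"
    using ar by (simp add: residual_cmp flip: u(3))
  finally have "cmp A c (residual k t n) = cmp A (cmp A c (cmp A ?g i)) u"
    using ar by simp
  moreover have "cmp A c (cmp A ?g i) = zer A (src A (cmp A ?g i)) (tgt A c)"
    using cokernel unfolding is_cokernel_def by (elim conjE)
  moreover have "src A u = src A n" using ar by (simp add: u(3))
  ultimately show ?thesis using ar by simp
qed

lemma residual_cokernel_le_sum: "x \<in> ar A \<Longrightarrow> tgt A x = tgt A k \<Longrightarrow> subobj_le A (residual \<sigma> c x) m"
proof (rule residual_le_if_cokernel_retraction[OF cokernel \<sigma> sum_mono[OF sum k n]])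
  note ar = k n t s i cokernel_arrows sum_arrow[OF sum k n]
  have "subobj_le A (cmp A (cmp A n s) i) m"
    using subobj_le_precomp[OF le_sum(2)[OF sum k n]] ar by simp
  then show "subobj_le A (cmp A (residual k t (cmp A n s)) i) m"
    using residual_le[OF k t(1) _ le_sum(1)[OF sum k n]] ar by (simp add: residual_cmp)
qed (use cokernel_arrows sum_arrow[OF sum k n] in simp_all)

lemma residual_idn_cmp:
  "x \<in> ar A \<Longrightarrow> tgt A x = tgt A k \<Longrightarrow> cmp A (residual k t (idn A (tgt A k))) x = residual k t x"
  using k t by (simp add: residual_cmp)

lemma sum_section_if_cokernel_retraction: "is_section A m"
proof -
  note ar = k n t s \<sigma>(1) cokernel_arrows sum_arrow[OF sum k n]
  define \<phi> where "\<phi> = add A (cmp A k t) (residual \<sigma> c (residual k t (idn A (tgt A k))))"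
  have \<phi>: "\<phi> \<in> ar A" "src A \<phi> = tgt A k" "tgt A \<phi> = tgt A k"
    unfolding \<phi>_def using ar by simp_all
  have \<phi>_cmp: "cmp A \<phi> x = add A (cmp A k (cmp A t x)) (residual \<sigma> c (residual k t x))"
    if "x \<in> ar A" "tgt A x = tgt A k" for x
    unfolding \<phi>_def using that ar residual_idn_cmp[OF that]
    by (simp add: cmp_add_left residual_cmp[of \<sigma> c])
  have "residual k t k = zer A (src A k) (tgt A k)"
    using residual_eq_zer_iff[OF k t(1) k] section_cancel[OF t(2)] ar by simp
  then have "cmp A \<phi> k = k" using \<phi>_cmp[of k] section_cancel[OF t(2)] ar by (simp add: residual_eq_self)
  moreover have "cmp A \<phi> n = n"
    using \<phi>_cmp[of n] ar cokernel_cmp_residual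
    by (simp add: residual_eq_self add_neg_cancel_left residual_def[of k t n])
  moreover have "subobj_le A \<phi> m"
    unfolding \<phi>_def using subobj_le_precomp[OF le_sum(1)[OF sum k n], of t] ar
    by (intro subobj_le_add residual_cokernel_le_sum) simp_all
  ultimately show ?thesis using sum_section_if_fixing[OF sum k n \<phi>] by blast
qed

lemma sum_fully_invariant_if_cokernel_coinvariant:
  assumes "fully_coinvariant_epi A c" "fully_invariant_mono A k"
  shows "fully_invariant_mono A m"
  unfolding fully_invariant_mono_iff
proof (intro conjI ballI sum_mono[OF sum k n])
  note ar = k n t s \<sigma>(1) cokernel_arrows sum_arrow[OF sum k n]
  fix h assume h: "h \<in> hom A (tgt A m) (tgt A m)"
  have hk: "subobj_le A (cmp A h k) m"
    using subobj_le_trans[OF fully_invariant_mono_le[OF assms(2) subobj_le_refl[OF k]] le_sum(1)[OF sum k n]]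
      h ar by simp
  define r where "r = residual k t n"
  have r: "r \<in> ar A" "src A r = src A n" "tgt A r = tgt A k" unfolding r_def using ar by simp_all
  have "h \<in> hom A (src A c) (src A c)" using h ar by simp
  then obtain \<beta> where \<beta>: "\<beta> \<in> hom A (tgt A c) (tgt A c)" "cmp A c h = cmp A \<beta> c"
    using assms(1) unfolding fully_coinvariant_epi_def by blast
  have "cmp A c (cmp A h r) = cmp A \<beta> (cmp A c r)"
    using \<beta> h r ar by (simp flip: cmp_assoc)
  then have "cmp A c (cmp A h r) = zer A (src A n) (tgt A c)"
    using cokernel_cmp_residual \<beta> r ar unfolding r_def by simp
  then have hr: "subobj_le A (cmp A h r) m"
    using residual_cokernel_le_sum[of "cmp A h r"] h r ar by (simp add: residual_eq_self)
  have hktn: "subobj_le A (cmp A (cmp A h k) (cmp A t n)) m"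
    using subobj_le_precomp[OF hk] h ar by simp
  have "n = add A (cmp A k (cmp A t n)) r"
    unfolding r_def residual_def using ar by (simp add: add_neg_cancel_left)
  then have "cmp A h n = cmp A h (add A (cmp A k (cmp A t n)) r)" by (rule arg_cong)
  also have "\<dots> = add A (cmp A (cmp A h k) (cmp A t n)) (cmp A h r)"
    using h r ar by (simp add: cmp_add_right)
  finally have hn: "cmp A h n = add A (cmp A (cmp A h k) (cmp A t n)) (cmp A h r)" .
  have "subobj_le A (cmp A h n) m"
    unfolding hn using subobj_le_add[OF hktn hr] h r ar by simp
  with hk show "subobj_le A (cmp A h m) m"
    using h ar by (intro sum_le[OF sum k n sum_mono[OF sum k n]]) simp_all
qed

end

lemma direct_summandE:
  assumes "direct_summand A k M"
  obtains t where "k \<in> ar A" "tgt A k = M" "t \<in> hom A M (src A k)" "cmp A t k = idn A (src A k)"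
  using assms unfolding direct_summand_def is_section_def by auto

lemma intersection_summand_criterion:
  assumes "is_kernel A i d" "subobj_le A i n" "direct_summand A n M" "direct_summand A k M"
    "is_intersection A k n m"
  obtains g where "g \<in> hom A M M"
    and "\<And>\<kappa>. is_kernel A \<kappa> (cmp A d g) \<Longrightarrow> is_section A \<kappa> \<Longrightarrow> direct_summand A m M"
    and "\<And>\<kappa>. is_kernel A \<kappa> (cmp A d g) \<Longrightarrow> is_section A \<kappa> \<Longrightarrow> fully_invariant_mono A \<kappa> \<Longrightarrow>
      fully_invariant_mono A k \<Longrightarrow> fi_direct_summand A m M"
proof -
  obtain s where n: "n \<in> ar A" "tgt A n = M" and s: "s \<in> hom A M (src A n)" "cmp A s n = idn A (src A n)"
    using assms(3) by (rule direct_summandE)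
  obtain t where k: "k \<in> ar A" "tgt A k = M" and t: "t \<in> hom A M (src A k)" "cmp A t k = idn A (src A k)"
    using assms(4) by (rule direct_summandE)
  obtain p1 p2 where pb: "is_pullback A k n p1 p2" and m: "m = cmp A k p1"
    using assms(5) unfolding is_intersection_def by blast
  let ?g = "residual n s (cmp A k t)"
  have g: "?g \<in> hom A M M" using n s k t by simp
  have kernel: "is_kernel A \<kappa> ?g" if "is_kernel A \<kappa> (cmp A d ?g)" for \<kappa>
    using is_kernel_if_kernel_comp[OF assms(1,2) n(1) _ s(2) _ _ that]
      retraction_cmp_residual[OF n(1) _ s(2)] n s k t by simp
  have "tgt A m = M" using m pb k t by (simp add: pullback_arrows)
  then show ?thesis
    using that[OF g] kernel n s k t pb unfolding m direct_summand_def fi_direct_summand_def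
    by (metis intersection_section_if_kernel_section intersection_fully_invariant_if_kernel_fully_invariant)
qed

lemma sum_summand_criterion:
  assumes "subobj_le A n i" "i \<in> ar A" "direct_summand A n M" "direct_summand A k M" "is_sum A k n m"
  obtains g where "g \<in> hom A M M"
    and "\<And>c. is_cokernel A c (cmp A g i) \<Longrightarrow> is_retraction A c \<Longrightarrow> direct_summand A m M"
    and "\<And>c. is_cokernel A c (cmp A g i) \<Longrightarrow> is_retraction A c \<Longrightarrow> fully_coinvariant_epi A c \<Longrightarrow>
      fully_invariant_mono A k \<Longrightarrow> fi_direct_summand A m M"
proof -
  obtain s where n: "n \<in> ar A" "tgt A n = M" and s: "s \<in> hom A M (src A n)" "cmp A s n = idn A (src A n)"
    using assms(3) by (rule direct_summandE)
  obtain t where k: "k \<in> ar A" "tgt A k = M" and t: "t \<in> hom A M (src A k)" "cmp A t k = idn A (src A k)"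
    using assms(4) by (rule direct_summandE)
  let ?g = "residual k t (cmp A n s)"
  have g: "?g \<in> hom A M M" using n s k t by simp
  have "tgt A m = M" using sum_arrow[OF assms(5) k(1)] n k by simp
  then show ?thesis
    using that[OF g] n s k t assms(1,2,5) unfolding direct_summand_def fi_direct_summand_def is_retraction_def
    by (metis sum_section_if_cokernel_retraction sum_fully_invariant_if_cokernel_coinvariant)
qed

context
  fixes i d :: 'm
  assumes kernel: "is_kernel A i d"
begin

lemma kernel_arrows: "i \<in> ar A" "d \<in> ar A" "tgt A i = src A d"
  using kernel unfolding is_kernel_def by auto

lemma intersection_direct_summand_if_self_split:
  assumes "M_F_split A (tgt A i) i d" "subobj_le A i n" "direct_summand A n (tgt A i)"
    "direct_summand A k (tgt A i)" "is_intersection A k n m"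
  shows "direct_summand A m (tgt A i)"
proof -
  obtain g where g: "g \<in> hom A (tgt A i) (tgt A i)"
    and summand: "\<And>\<kappa>. is_kernel A \<kappa> (cmp A d g) \<Longrightarrow> is_section A \<kappa> \<Longrightarrow> direct_summand A m (tgt A i)"
    by (rule intersection_summand_criterion[OF kernel assms(2-5)]) blast
  obtain \<kappa> where \<kappa>: "is_kernel A \<kappa> (cmp A d g)" using kernel_exists[of "cmp A d g"] kernel_arrows g by auto
  have "is_section A \<kappa>" using assms(1) g \<kappa> unfolding M_F_split_def by blast
  then show ?thesis using summand[OF \<kappa>] by blast
qed

lemma intersection_fi_direct_summand_if_strongly_self_split:
  assumes "strongly_M_F_split A (tgt A i) i d" "subobj_le A i n" "direct_summand A n (tgt A i)"
    "fi_direct_summand A k (tgt A i)" "is_intersection A k n m"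
  shows "fi_direct_summand A m (tgt A i)"
proof -
  have k: "direct_summand A k (tgt A i)" "fully_invariant_mono A k"
    using assms(4) unfolding fi_direct_summand_def by blast+
  obtain g where g: "g \<in> hom A (tgt A i) (tgt A i)"
    and "\<And>\<kappa>. is_kernel A \<kappa> (cmp A d g) \<Longrightarrow> is_section A \<kappa> \<Longrightarrow> direct_summand A m (tgt A i)"
    and summand: "\<And>\<kappa>. is_kernel A \<kappa> (cmp A d g) \<Longrightarrow> is_section A \<kappa> \<Longrightarrow> fully_invariant_mono A \<kappa> \<Longrightarrow>
      fully_invariant_mono A k \<Longrightarrow> fi_direct_summand A m (tgt A i)"
    by (rule intersection_summand_criterion[OF kernel assms(2,3) k(1) assms(5)]) blast
  obtain \<kappa> where \<kappa>: "is_kernel A \<kappa> (cmp A d g)" using kernel_exists[of "cmp A d g"] kernel_arrows g by auto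
  have "is_section A \<kappa>" "fully_invariant_mono A \<kappa>"
    using assms(1) g \<kappa> unfolding strongly_M_F_split_def by blast+
  then show ?thesis using summand[OF \<kappa> _ _ k(2)] by blast
qed

lemma sum_direct_summand_if_dual_self_split:
  assumes "dual_M_F_split A (tgt A i) i d" "subobj_le A n i" "direct_summand A n (tgt A i)"
    "direct_summand A k (tgt A i)" "is_sum A k n m"
  shows "direct_summand A m (tgt A i)"
proof -
  obtain g where g: "g \<in> hom A (tgt A i) (tgt A i)"
    and summand: "\<And>c. is_cokernel A c (cmp A g i) \<Longrightarrow> is_retraction A c \<Longrightarrow> direct_summand A m (tgt A i)"
    by (rule sum_summand_criterion[OF assms(2) kernel_arrows(1) assms(3-5)]) blast
  obtain c where c: "is_cokernel A c (cmp A g i)" using cokernel_exists[of "cmp A g i"] kernel_arrows g by auto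
  have "is_retraction A c" using assms(1) g c unfolding dual_M_F_split_def by blast
  then show ?thesis using summand[OF c] by blast
qed

lemma sum_fi_direct_summand_if_dual_strongly_self_split:
  assumes "dual_strongly_M_F_split A (tgt A i) i d" "subobj_le A n i" "direct_summand A n (tgt A i)"
    "fi_direct_summand A k (tgt A i)" "is_sum A k n m"
  shows "fi_direct_summand A m (tgt A i)"
proof -
  have k: "direct_summand A k (tgt A i)" "fully_invariant_mono A k"
    using assms(4) unfolding fi_direct_summand_def by blast+
  obtain g where g: "g \<in> hom A (tgt A i) (tgt A i)"
    and "\<And>c. is_cokernel A c (cmp A g i) \<Longrightarrow> is_retraction A c \<Longrightarrow> direct_summand A m (tgt A i)"
    and summand: "\<And>c. is_cokernel A c (cmp A g i) \<Longrightarrow> is_retraction A c \<Longrightarrow> fully_coinvariant_epi A c \<Longrightarrow>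
      fully_invariant_mono A k \<Longrightarrow> fi_direct_summand A m (tgt A i)"
    by (rule sum_summand_criterion[OF assms(2) kernel_arrows(1) assms(3) k(1) assms(5)]) blast
  obtain c where c: "is_cokernel A c (cmp A g i)" using cokernel_exists[of "cmp A g i"] kernel_arrows g by auto
  have "is_retraction A c" "fully_coinvariant_epi A c"
    using assms(1) g c unfolding dual_strongly_M_F_split_def by blast+
  then show ?thesis using summand[OF c _ _ k(2)] by blast
qed

end

end

theorem proposition3p6:
  fixes A :: "('o, 'm) acat" and i d :: 'm
  assumes "abelian A"
    and "short_exact A i d"
    and "fully_invariant_mono A i"
  shows
   "(M_F_split A (tgt A i) i d \<longrightarrow>
       (\<forall>n k m. direct_summand A n (tgt A i) \<and> subobj_le A i n \<and>
          direct_summand A k (tgt A i) \<and> is_intersection A k n m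
          \<longrightarrow> direct_summand A m (tgt A i))) \<and>
    (strongly_M_F_split A (tgt A i) i d \<longrightarrow>
       (\<forall>n k m. direct_summand A n (tgt A i) \<and> subobj_le A i n \<and>
          fi_direct_summand A k (tgt A i) \<and> is_intersection A k n m
          \<longrightarrow> fi_direct_summand A m (tgt A i))) \<and>
    (dual_M_F_split A (tgt A i) i d \<longrightarrow>
       (\<forall>n k m. direct_summand A n (tgt A i) \<and> subobj_le A n i \<and>
          direct_summand A k (tgt A i) \<and> is_sum A k n m
          \<longrightarrow> direct_summand A m (tgt A i))) \<and>
    (dual_strongly_M_F_split A (tgt A i) i d \<longrightarrow>
       (\<forall>n k m. direct_summand A n (tgt A i) \<and> subobj_le A n i \<and>
          fi_direct_summand A k (tgt A i) \<and> is_sum A k n m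
          \<longrightarrow> fi_direct_summand A m (tgt A i)))"
proof -
  interpret abelian_category A by (rule abelian_category.intro) fact
  have kernel: "is_kernel A i d" using assms(2) unfolding short_exact_def by blast
  show ?thesis
    using intersection_direct_summand_if_self_split[OF kernel]
      intersection_fi_direct_summand_if_strongly_self_split[OF kernel]
      sum_direct_summand_if_dual_self_split[OF kernel]
      sum_fi_direct_summand_if_dual_strongly_self_split[OF kernel]
    by blast
qed

end
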